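(* Let $\mathrm W_\Omega$ be the Whitney decomposition of $\Omega=\mathbb G\setminus\mathbb A$ into dyadic rectangles as described below. For $Q\in\mathrm W_\Omega$ let $Q^*$ be the union of all rectangles of $\mathrm W_\Omega$ touching $Q$, and $Q^{**}$ the union of all rectangles of $\mathrm W_\Omega$ touching $Q^*$. Then there are $L\ge1$ and $N'\in\mathbb N$ such that for every $Q\in\mathrm W_\Omega$ the set $Q^{**}$, with the metric $d_{cc}$, admits an $L$-bi-Lipschitz embedding into $\mathbb R^{N'}$.
   Context: The Grushin plane $\mathbb G$ is $\mathbb R^2$ with horizontal distribution spanned by $X_1=\partial_x$ and $X_2=x\,\partial_y$, with Carnot–Carathéodory distance $d_{cc}$ (infimum of $\int_0^1\sqrt{a^2+b^2}\,dt$ over absolutely continuous curves $(\mathrm x,\mathrm y)$ with $\mathrm x'=a$, $\mathrm y'=\mathrm x\,b$ joining the points). $\mathbb A=\{0\}\times\mathbb R$. $\mathrm W_\Omega$ is a family of rectangles from the meshes $M_j=2^{-j}M_0\times2^{-2j}M_0$ ($M_0$ the unit square lattice mesh, so $M_j$ consists of rectangles $[2^{-j}m,2^{-j}(m+1)]\times[2^{-2j}n,2^{-2j}(n+1)]$), with union $\Omega=\mathbb G\setminus\mathbb A$, pairwise disjoint interiors, and $\operatorname{dist}_{cc}(Q,\mathbb A)\le\operatorname{diam}_{cc}(Q)\le 8\operatorname{dist}_{cc}(Q,\mathbb A)$. *)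

theory Defs
  imports "HOL-Analysis.Analysis"
begin

text \<open>Horizontal curves of the Grushin plane, encoded by their controls a, b:
  x' = a, y' = x b, i.e. the absolutely continuous curve is recovered by integration.\<close>
definition grushin_horizontal ::
  "(real \<times> real) \<Rightarrow> (real \<times> real) \<Rightarrow> (real \<Rightarrow> real) \<Rightarrow> (real \<Rightarrow> real) \<Rightarrow> (real \<Rightarrow> real) \<Rightarrow> (real \<Rightarrow> real) \<Rightarrow> bool"
  where "grushin_horizontal p q cx cy a b \<longleftrightarrow>
     a absolutely_integrable_on {0..1} \<and> b absolutely_integrable_on {0..1} \<and>
     (\<lambda>t. cx t * b t) absolutely_integrable_on {0..1} \<and>
     (\<forall>t\<in>{0..1}. cx t = fst p + integral {0..t} a) \<and>
     (\<forall>t\<in>{0..1}. cy t = snd p + integral {0..t} (\<lambda>s. cx s * b s)) \<and>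
     cx 1 = fst q \<and> cy 1 = snd q"

definition dcc :: "(real \<times> real) \<Rightarrow> (real \<times> real) \<Rightarrow> real" where
  "dcc p q = Inf {integral {0..1} (\<lambda>t. sqrt ((a t)\<^sup>2 + (b t)\<^sup>2)) | cx cy a b.
                    grushin_horizontal p q cx cy a b}"

definition axisA :: "(real \<times> real) set" where
  "axisA = {p. fst p = 0}"

definition Omega :: "(real \<times> real) set" where
  "Omega = {p. fst p \<noteq> 0}"

definition dyadic_rect :: "int \<Rightarrow> int \<Rightarrow> int \<Rightarrow> (real \<times> real) set" where
  "dyadic_rect j m n = {2 powr (- real_of_int j) * real_of_int m .. 2 powr (- real_of_int j) * (real_of_int m + 1)}
                     \<times> {2 powr (- 2 * real_of_int j) * real_of_int n .. 2 powr (- 2 * real_of_int j) * (real_of_int n + 1)}"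

definition dist_cc :: "(real \<times> real) set \<Rightarrow> (real \<times> real) set \<Rightarrow> real" where
  "dist_cc S T = Inf {dcc p q | p q. p \<in> S \<and> q \<in> T}"

definition diam_cc :: "(real \<times> real) set \<Rightarrow> real" where
  "diam_cc S = Sup {dcc p q | p q. p \<in> S \<and> q \<in> S}"

definition whitney_family :: "(real \<times> real) set set \<Rightarrow> bool" where
  "whitney_family W \<longleftrightarrow>
     (\<forall>Q\<in>W. \<exists>j m n. Q = dyadic_rect j m n) \<and>
     \<Union>W = Omega \<and>
     (\<forall>Q\<in>W. \<forall>Q'\<in>W. Q \<noteq> Q' \<longrightarrow> interior Q \<inter> interior Q' = {}) \<and>
     (\<forall>Q\<in>W. dist_cc Q axisA \<le> diam_cc Q \<and> diam_cc Q \<le> 8 * dist_cc Q axisA)"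

definition touching_union :: "(real \<times> real) set set \<Rightarrow> (real \<times> real) set \<Rightarrow> (real \<times> real) set" where
  "touching_union W S = \<Union>{Q'\<in>W. Q' \<inter> S \<noteq> {}}"

definition eucl_dist :: "nat \<Rightarrow> (nat \<Rightarrow> real) \<Rightarrow> (nat \<Rightarrow> real) \<Rightarrow> real" where
  "eucl_dist N u v = sqrt (\<Sum>i<N. (u i - v i)\<^sup>2)"

text \<open>f is an L-bi-Lipschitz embedding of (S, dcc) into R^N (points of R^N are
  the first N coordinates of a nat-indexed vector).\<close>
definition bilip_embedding :: "real \<Rightarrow> nat \<Rightarrow> (real \<times> real) set \<Rightarrow> ((real \<times> real) \<Rightarrow> nat \<Rightarrow> real) \<Rightarrow> bool" where
  "bilip_embedding L N S f \<longleftrightarrow>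
     (\<forall>p\<in>S. \<forall>q\<in>S. dcc p q / L \<le> eucl_dist N (f p) (f q) \<and> eucl_dist N (f p) (f q) \<le> L * dcc p q)"

end

theory Submission
  imports Defs
begin

(* Away from the singular line x = 0 the Grushin metric at horizontal scale h looks
   like the Euclidean metric after rescaling the vertical coordinate by 1/h.  Precisely:
   if all points of a set S have |x| comparable to h (with constant K), lie on the same
   side of the axis, and have vertical oscillation at most K h^2 (a "scale cluster"),
   then the chart (x, y) \<mapsto> (x, y/h) is (2K+1)-bi-Lipschitz on S.  The upper bound for
   dcc uses an explicit horizontal curve (x linear, constant vertical control); the lower
   bound uses the estimates |dx| \<le> len and |dy| \<le> (|x| + len) len valid for every curve.

   The Whitney condition dist \<le> diam forces every rectangle of the family to lie at
   distance between one and two widths from the axis, so it is a scale cluster at its own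
   width h; a rectangle touching a scale cluster has comparable width, so taking the
   union of touching rectangles keeps a scale cluster (with a larger constant).  Applied
   twice, Q** is a 156-cluster, hence embeds 313-bi-Lipschitz into R^2. *)

abbreviation curve_length :: "(real \<Rightarrow> real) \<Rightarrow> (real \<Rightarrow> real) \<Rightarrow> real" where
  "curve_length a b \<equiv> integral {0..1} (\<lambda>t. sqrt ((a t)\<^sup>2 + (b t)\<^sup>2))"

lemma speed_absolutely_integrable:
  fixes a b :: "real \<Rightarrow> real"
  assumes "a absolutely_integrable_on S" "b absolutely_integrable_on S"
  shows "(\<lambda>t. sqrt ((a t)\<^sup>2 + (b t)\<^sup>2)) absolutely_integrable_on S"
proof -
  have "(\<lambda>t. (a t, b t)) absolutely_integrable_on S"
  proof (subst absolutely_integrable_componentwise_iff, intro ballI)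
    fix u :: "real \<times> real" assume "u \<in> Basis"
    then have "u = (1,0) \<or> u = (0,1)" by (auto simp: Basis_prod_def)
    then show "(\<lambda>t. (a t, b t) \<bullet> u) absolutely_integrable_on S"
      using assms by (auto simp: inner_prod_def)
  qed
  from absolutely_integrable_norm[OF this] show ?thesis
    by (simp add: o_def norm_Pair)
qed

(* Every horizontal curve of length len from p to q satisfies |dx| \<le> len and, since
   |x| \<le> |x_p| + len along the curve, |dy| \<le> (|x_p| + len) len. *)
lemma horizontal_curve_bounds:
  assumes H: "grushin_horizontal p q cx cy a b"
  shows "0 \<le> curve_length a b"
    and "\<bar>fst q - fst p\<bar> \<le> curve_length a b"
    and "\<bar>snd q - snd p\<bar> \<le> (\<bar>fst p\<bar> + curve_length a b) * curve_length a b"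
proof -
  define g where "g = (\<lambda>t. sqrt ((a t)\<^sup>2 + (b t)\<^sup>2))"
  define len where "len = integral {0..1} g"
  have aa: "a absolutely_integrable_on {0..1}" and ba: "b absolutely_integrable_on {0..1}"
    and ca: "(\<lambda>t. cx t * b t) absolutely_integrable_on {0..1}"
    and cx: "\<forall>t\<in>{0..1}. cx t = fst p + integral {0..t} a"
    and cy: "\<forall>t\<in>{0..1}. cy t = snd p + integral {0..t} (\<lambda>s. cx s * b s)"
    and ends: "cx 1 = fst q" "cy 1 = snd q"
    using H unfolding grushin_horizontal_def by auto
  have gi: "g integrable_on {0..1}"
    using speed_absolutely_integrable[OF aa ba] unfolding g_def absolutely_integrable_on_def by blast
  have ai: "a integrable_on {0..1}" using aa absolutely_integrable_on_def by blast
  have ci: "(\<lambda>t. cx t * b t) integrable_on {0..1}" using ca absolutely_integrable_on_def by blast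
  have g0: "\<And>t. 0 \<le> g t" unfolding g_def by simp
  have ag: "\<And>t. norm (a t) \<le> g t" unfolding g_def by (simp add: real_sqrt_ge_abs1)
  have bg: "\<And>t. \<bar>b t\<bar> \<le> g t" unfolding g_def by (simp add: real_sqrt_ge_abs2)
  have len0: "0 \<le> len" unfolding len_def by (rule integral_nonneg[OF gi]) (simp add: g0)
  have partial: "\<bar>integral {0..t} a\<bar> \<le> len" if t: "t \<in> {0..1}" for t
  proof -
    have sub: "{0..t} \<subseteq> {0..1}" using t by auto
    have git: "g integrable_on {0..t}" using integrable_on_subinterval[OF gi sub] .
    have "\<bar>integral {0..t} a\<bar> \<le> integral {0..t} g"
      using integral_norm_bound_integral[OF integrable_on_subinterval[OF ai sub] git ag] by simp
    also have "\<dots> \<le> len"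
      unfolding len_def using integral_subset_le[OF sub git gi] g0 by blast
    finally show ?thesis .
  qed
  show "0 \<le> curve_length a b" using len0 unfolding len_def g_def .
  show "\<bar>fst q - fst p\<bar> \<le> curve_length a b"
    using partial[of 1] cx ends unfolding len_def g_def by auto
  define M where "M = \<bar>fst p\<bar> + len"
  have cxb: "\<bar>cx t\<bar> \<le> M" if "t \<in> {0..1}" for t
    using partial[OF that] cx that unfolding M_def by auto
  have "norm (integral {0..1} (\<lambda>s. cx s * b s)) \<le> integral {0..1} (\<lambda>t. M * g t)"
  proof (rule integral_norm_bound_integral[OF ci integrable_on_mult_right[OF gi]])
    fix t :: real assume t: "t \<in> {0..1}"
    have "\<bar>cx t\<bar> * \<bar>b t\<bar> \<le> M * g t"
      by (rule mult_mono[OF cxb[OF t] bg]) (auto simp: M_def len0)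
    then show "norm (cx t * b t) \<le> M * g t" by (simp add: abs_mult)
  qed
  moreover have "snd q - snd p = integral {0..1} (\<lambda>s. cx s * b s)" using cy ends by auto
  ultimately show "\<bar>snd q - snd p\<bar> \<le> (\<bar>fst p\<bar> + curve_length a b) * curve_length a b"
    unfolding integral_mult_right M_def len_def g_def by simp
qed

lemma straight_horizontal_curve:
  assumes s: "fst p + fst q \<noteq> 0"
  defines "\<beta> \<equiv> 2 * (snd q - snd p) / (fst p + fst q)"
  shows "\<exists>cx cy a b. grushin_horizontal p q cx cy a b \<and>
           curve_length a b = sqrt ((fst q - fst p)\<^sup>2 + \<beta>\<^sup>2)"
proof -
  define dx where "dx = fst q - fst p"
  define cx where "cx = (\<lambda>t::real. fst p + t * dx)"
  define Y where "Y = (\<lambda>t::real. \<beta> * (fst p * t + dx * t\<^sup>2 / 2))"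
  have intY: "integral {0..t} (\<lambda>s. cx s * \<beta>) = Y t" if "0 \<le> t" for t
  proof -
    have "((\<lambda>s. cx s * \<beta>) has_integral Y t - Y 0) {0..t}"
    proof (rule fundamental_theorem_of_calculus[OF that])
      fix x assume "x \<in> {0..t}"
      have "(Y has_real_derivative cx x * \<beta>) (at x within {0..t})"
        unfolding cx_def Y_def by (auto intro!: derivative_eq_intros simp: algebra_simps)
      then show "(Y has_vector_derivative cx x * \<beta>) (at x within {0..t})"
        by (simp add: has_real_derivative_iff_has_vector_derivative)
    qed
    then show ?thesis by (rule integral_unique[THEN trans]) (simp add: Y_def)
  qed
  have "grushin_horizontal p q cx (\<lambda>t. snd p + Y t) (\<lambda>t. dx) (\<lambda>t. \<beta>)"
    unfolding grushin_horizontal_def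
  proof (intro conjI ballI)
    show "(\<lambda>t::real. dx) absolutely_integrable_on {0..1}"
      and "(\<lambda>t::real. \<beta>) absolutely_integrable_on {0..1}"
      and "(\<lambda>t. cx t * \<beta>) absolutely_integrable_on {0..1}"
      unfolding cx_def by (intro absolutely_integrable_continuous_real continuous_intros)+
    fix t :: real assume t: "t \<in> {0..1}"
    show "cx t = fst p + integral {0..t} (\<lambda>t. dx)" using t by (simp add: cx_def)
    show "snd p + Y t = snd p + integral {0..t} (\<lambda>s. cx s * \<beta>)" using intY[of t] t by simp
  next
    show "cx 1 = fst q" by (simp add: cx_def dx_def)
    have "\<beta> * (fst p + dx / 2) = snd q - snd p"
      using s unfolding \<beta>_def dx_def by (simp add: field_simps)
    then show "snd p + Y 1 = snd q" by (simp add: Y_def algebra_simps)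
  qed
  then show ?thesis by (intro exI) (auto simp: dx_def)
qed

lemma dcc_le_straight:
  assumes "fst p + fst q \<noteq> 0"
  shows "dcc p q \<le> sqrt ((fst q - fst p)\<^sup>2 + (2 * (snd q - snd p) / (fst p + fst q))\<^sup>2)"
proof -
  obtain cx cy a b where H: "grushin_horizontal p q cx cy a b"
    and len: "curve_length a b = sqrt ((fst q - fst p)\<^sup>2 + (2 * (snd q - snd p) / (fst p + fst q))\<^sup>2)"
    using straight_horizontal_curve[OF assms] by blast
  have "bdd_below {curve_length a b | cx cy a b. grushin_horizontal p q cx cy a b}"
    by (rule bdd_belowI[of _ 0]) (auto dest: horizontal_curve_bounds(1))
  moreover have "curve_length a b \<in> {curve_length a b | cx cy a b. grushin_horizontal p q cx cy a b}"
    using H by blast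
  ultimately show ?thesis
    unfolding dcc_def len[symmetric] by (rule cInf_lower[rotated])
qed

(* A lower bound for the lengths of all horizontal curves is a lower bound for dcc
   (the set of curves is nonempty when x_p + x_q \<noteq> 0). *)
lemma dcc_ge:
  assumes "fst p + fst q \<noteq> 0"
    and "\<And>cx cy a b. grushin_horizontal p q cx cy a b \<Longrightarrow> B \<le> curve_length a b"
  shows "B \<le> dcc p q"
  unfolding dcc_def using straight_horizontal_curve[OF assms(1)] assms(2)
  by (intro cInf_greatest) blast+

lemma dcc_ge_fst_dist:
  assumes "fst p + fst q \<noteq> 0"
  shows "\<bar>fst q - fst p\<bar> \<le> dcc p q"
  using assms by (rule dcc_ge) (rule horizontal_curve_bounds(2))

lemma dcc_le_sum_abs:
  assumes "fst p + fst q \<noteq> 0"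
  shows "dcc p q \<le> \<bar>fst q - fst p\<bar> + 2 * \<bar>snd q - snd p\<bar> / \<bar>fst p + fst q\<bar>"
proof -
  have "dcc p q \<le> sqrt ((fst q - fst p)\<^sup>2 + (2 * (snd q - snd p) / (fst p + fst q))\<^sup>2)"
    using assms by (rule dcc_le_straight)
  also have "\<dots> \<le> \<bar>fst q - fst p\<bar> + \<bar>2 * (snd q - snd p) / (fst p + fst q)\<bar>"
    by (rule sqrt_sum_squares_le_sum_abs)
  also have "\<bar>2 * (snd q - snd p) / (fst p + fst q)\<bar> = 2 * \<bar>snd q - snd p\<bar> / \<bar>fst p + fst q\<bar>"
    by (simp only: abs_divide abs_mult abs_numeral)
  finally show ?thesis .
qed

lemma same_sign_trans: "0 < (a::real) * b \<Longrightarrow> 0 < c * b \<Longrightarrow> 0 < a * c"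
  by (auto simp: zero_less_mult_iff)

lemma same_sign_abs_add: "0 < (a::real) * b \<Longrightarrow> \<bar>a + b\<bar> = \<bar>a\<bar> + \<bar>b\<bar>"
  by (cases "a > 0") (auto simp: zero_less_mult_iff)

definition grushin_chart :: "real \<Rightarrow> real \<times> real \<Rightarrow> nat \<Rightarrow> real" where
  "grushin_chart h p i = (if i = 0 then fst p else snd p / h)"

lemma eucl_dist_grushin_chart:
  "eucl_dist 2 (grushin_chart h p) (grushin_chart h q) =
     sqrt ((fst p - fst q)\<^sup>2 + ((snd p - snd q) / h)\<^sup>2)"
  by (simp add: eucl_dist_def grushin_chart_def numeral_2_eq_2 lessThan_Suc diff_divide_distrib)

lemma dcc_le_chart_dist:
  assumes h: "h > 0" and K: "K \<ge> 1"
    and xp: "h \<le> K * \<bar>fst p\<bar>" and xq: "h \<le> K * \<bar>fst q\<bar>" and sg: "0 < fst p * fst q"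
  shows "dcc p q \<le> K * eucl_dist 2 (grushin_chart h p) (grushin_chart h q)"
proof -
  define dx dy where "dx = fst p - fst q" and "dy = (snd p - snd q) / h"
  define \<beta> where "\<beta> = 2 * (snd q - snd p) / (fst p + fst q)"
  have "\<bar>fst p + fst q\<bar> = \<bar>fst p\<bar> + \<bar>fst q\<bar>"
    using sg by (rule same_sign_abs_add)
  then have sum: "2 * h \<le> K * \<bar>fst p + fst q\<bar>" using xp xq by (simp add: distrib_left)
  then have s: "fst p + fst q \<noteq> 0" using h by auto
  have "\<bar>\<beta>\<bar> * (2 * h) \<le> \<bar>\<beta>\<bar> * (K * \<bar>fst p + fst q\<bar>)"
    using sum by (rule mult_left_mono) simp
  also have "\<dots> = K * (2 * h * \<bar>dy\<bar>)"
  proof -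
    have "\<bar>\<beta>\<bar> = 2 * \<bar>snd p - snd q\<bar> / \<bar>fst p + fst q\<bar>"
      unfolding \<beta>_def by (simp only: abs_divide abs_mult abs_numeral abs_minus_commute)
    then show ?thesis using s h by (simp add: dy_def abs_divide)
  qed
  finally have "\<bar>\<beta>\<bar> \<le> K * \<bar>dy\<bar>" using h by simp
  then have "\<bar>\<beta>\<bar>\<^sup>2 \<le> \<bar>K * dy\<bar>\<^sup>2" using K by (intro power_mono) (auto simp: abs_mult)
  moreover have "1 * dx\<^sup>2 \<le> K\<^sup>2 * dx\<^sup>2" using K by (intro mult_right_mono) auto
  ultimately have "(fst q - fst p)\<^sup>2 + \<beta>\<^sup>2 \<le> K\<^sup>2 * (dx\<^sup>2 + dy\<^sup>2)"
    by (simp add: dx_def power2_commute power_mult_distrib distrib_left)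
  then have "sqrt ((fst q - fst p)\<^sup>2 + \<beta>\<^sup>2) \<le> sqrt (K\<^sup>2 * (dx\<^sup>2 + dy\<^sup>2))"
    by (rule real_sqrt_le_mono)
  also have "\<dots> = K * sqrt (dx\<^sup>2 + dy\<^sup>2)" using K by (simp add: real_sqrt_mult)
  finally have "sqrt ((fst q - fst p)\<^sup>2 + \<beta>\<^sup>2) \<le> K * sqrt (dx\<^sup>2 + dy\<^sup>2)" .
  then show ?thesis
    using dcc_le_straight[OF s] unfolding eucl_dist_grushin_chart dx_def dy_def \<beta>_def by linarith
qed

(* Lower bound: if |x_p| \<le> K h and |dy| \<le> 2 K h^2, then the chart distance is at
   most (2K+1) dcc; short curves stay at scale h, long ones are controlled by |dy|. *)
lemma chart_dist_le_dcc:
  assumes h: "h > 0" and K: "K \<ge> 1"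
    and xp: "\<bar>fst p\<bar> \<le> K * h" and s: "fst p + fst q \<noteq> 0"
    and dy: "\<bar>snd p - snd q\<bar> \<le> 2 * K * h\<^sup>2"
  shows "eucl_dist 2 (grushin_chart h p) (grushin_chart h q) \<le> (2 * K + 1) * dcc p q"
proof -
  define E where "E = eucl_dist 2 (grushin_chart h p) (grushin_chart h q)"
  have E: "E \<le> \<bar>fst q - fst p\<bar> + \<bar>snd q - snd p\<bar> / h"
    unfolding E_def eucl_dist_grushin_chart
    using sqrt_sum_squares_le_sum_abs[of "fst p - fst q" "(snd p - snd q) / h"] h
    by (simp add: abs_divide abs_minus_commute)
  have "E / (2 * K + 1) \<le> dcc p q"
  proof (rule dcc_ge[OF s])
    fix cx cy a b assume H: "grushin_horizontal p q cx cy a b"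
    define l where "l = curve_length a b"
    have l0: "0 \<le> l" and lx: "\<bar>fst q - fst p\<bar> \<le> l" and ly: "\<bar>snd q - snd p\<bar> \<le> (\<bar>fst p\<bar> + l) * l"
      using horizontal_curve_bounds[OF H] unfolding l_def by auto
    have "\<bar>snd q - snd p\<bar> \<le> 2 * K * h * l"
    proof (cases "l \<le> h")
      case True
      have "1 * h \<le> K * h" using K h by (intro mult_right_mono) auto
      then have "(\<bar>fst p\<bar> + l) * l \<le> (2 * K * h) * l"
        by (intro mult_right_mono) (use True xp l0 in auto)
      then show ?thesis using ly by linarith
    next
      case False
      have "2 * K * h * h \<le> 2 * K * h * l" using False h K by (intro mult_left_mono) auto
      then show ?thesis using dy by (simp add: power2_eq_square abs_minus_commute)
    qed
    then have "\<bar>snd q - snd p\<bar> / h \<le> 2 * K * l" using h by (simp add: divide_le_eq mult_ac)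
    then have "E \<le> (2 * K + 1) * l" using E lx by (simp add: distrib_right)
    then show "E / (2 * K + 1) \<le> l" using K by (simp add: divide_le_eq mult.commute)
  qed
  then show ?thesis using K by (simp add: E_def divide_le_eq mult.commute)
qed

definition scale_cluster :: "real \<Rightarrow> real \<Rightarrow> real \<times> real \<Rightarrow> (real \<times> real) set \<Rightarrow> bool" where
  "scale_cluster K h p0 S \<longleftrightarrow>
     (\<forall>z\<in>S. h \<le> K * \<bar>fst z\<bar> \<and> \<bar>fst z\<bar> \<le> K * h \<and> 0 < fst z * fst p0 \<and>
             \<bar>snd z - snd p0\<bar> \<le> K * h\<^sup>2)"

lemma scale_cluster_bilip_embedding:
  assumes h: "h > 0" and K: "K \<ge> 1" and S: "scale_cluster K h p0 S"
  shows "bilip_embedding (2 * K + 1) 2 S (grushin_chart h)"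
  unfolding bilip_embedding_def
proof (intro ballI conjI)
  fix p q assume p: "p \<in> S" and q: "q \<in> S"
  define E where "E = eucl_dist 2 (grushin_chart h p) (grushin_chart h q)"
  have "0 < fst p * fst p0" "0 < fst q * fst p0" using S p q unfolding scale_cluster_def by auto
  then have sg: "0 < fst p * fst q" by (rule same_sign_trans)
  have "\<bar>snd p - snd q\<bar> \<le> \<bar>snd p - snd p0\<bar> + \<bar>snd q - snd p0\<bar>" by linarith
  also have "\<dots> \<le> K * h\<^sup>2 + K * h\<^sup>2"
    using S p q unfolding scale_cluster_def by (intro add_mono) auto
  finally have dy: "\<bar>snd p - snd q\<bar> \<le> 2 * K * h\<^sup>2" by simp
  have s: "fst p + fst q \<noteq> 0" using sg by (auto simp: zero_less_mult_iff)
  show "E \<le> (2 * K + 1) * dcc p q"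
    unfolding E_def using S p by (intro chart_dist_le_dcc[OF h K _ s dy]) (simp add: scale_cluster_def)
  have "dcc p q \<le> K * E"
    unfolding E_def using S p q by (intro dcc_le_chart_dist[OF h K _ _ sg]) (auto simp: scale_cluster_def)
  also have "\<dots> \<le> (2 * K + 1) * E"
    using K by (intro mult_right_mono) (auto simp: E_def eucl_dist_def intro: sum_nonneg)
  finally show "dcc p q / (2 * K + 1) \<le> E" using K by (simp add: divide_le_eq mult.commute)
qed

lemma dyadic_rect_scaled:
  assumes "h = 2 powr (- real_of_int j)"
  shows "dyadic_rect j m n = {h * m .. h * (m + 1)} \<times> {h\<^sup>2 * n .. h\<^sup>2 * (n + 1)}"
proof -
  have "2 powr (- 2 * real_of_int j) = h\<^sup>2"
    unfolding assms power2_eq_square powr_add[symmetric] by (simp add: algebra_simps)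
  then show ?thesis unfolding dyadic_rect_def assms by simp
qed

lemma dyadic_interval_off_origin:
  fixes h :: real and m :: int
  assumes h: "h > 0" and off: "0 \<notin> {h * m .. h * (m + 1)}"
  obtains k where "k \<ge> 1"
    and "\<forall>x\<in>{h * m .. h * (m + 1)}. h * k \<le> \<bar>x\<bar> \<and> \<bar>x\<bar> \<le> h * k + h"
    and "\<forall>x\<in>{h * m .. h * (m + 1)}. \<forall>y\<in>{h * m .. h * (m + 1)}. 0 < x * y"
proof -
  have "m \<ge> 1 \<or> m \<le> -2"
  proof (rule ccontr)
    assume "\<not> ?thesis"
    then have "m = 0 \<or> m = -1" by auto
    then show False using off h by auto
  qed
  then show ?thesis
  proof
    assume m: "m \<ge> 1"
    have hm: "h * 1 \<le> h * m" using m h by (intro mult_left_mono) auto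
    have pos: "h \<le> x \<and> \<bar>x\<bar> = x" if "x \<in> {h * m .. h * (m + 1)}" for x
    proof -
      have "h \<le> x" using that hm by simp
      then show ?thesis using h by simp
    qed
    show ?thesis
    proof (rule that[of m])
      show "\<forall>x\<in>{h * m .. h * (m + 1)}. \<forall>y\<in>{h * m .. h * (m + 1)}. 0 < x * y"
        using pos h by (meson mult_pos_pos order_less_le_trans)
    qed (use m pos h in \<open>auto simp: algebra_simps\<close>)
  next
    assume m: "m \<le> -2"
    have hm: "h * (m + 1) \<le> h * (-1)" using m h by (intro mult_left_mono) auto
    have neg: "x \<le> - h \<and> \<bar>x\<bar> = - x" if "x \<in> {h * m .. h * (m + 1)}" for x
    proof -
      have "x \<le> - h" using that hm by simp
      then show ?thesis using h by simp
    qed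
    show ?thesis
    proof (rule that[of "- (m + 1)"])
      show "\<forall>x\<in>{h * m .. h * (m + 1)}. \<forall>y\<in>{h * m .. h * (m + 1)}. 0 < x * y"
        using neg h by (meson mult_neg_neg neg_less_0_iff_less order_le_less_trans)
    qed (use m neg h in \<open>auto simp: algebra_simps\<close>)
  qed
qed

lemma dcc_le_box:
  assumes h: "h > 0" and xp: "h \<le> \<bar>fst p\<bar>" and xq: "h \<le> \<bar>fst q\<bar>" and sg: "0 < fst p * fst q"
    and dx: "\<bar>fst q - fst p\<bar> \<le> h" and dy: "\<bar>snd q - snd p\<bar> \<le> h\<^sup>2"
  shows "dcc p q \<le> 2 * h"
proof -
  have "\<bar>fst p + fst q\<bar> = \<bar>fst p\<bar> + \<bar>fst q\<bar>"
    using sg by (rule same_sign_abs_add)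
  then have sum: "2 * h \<le> \<bar>fst p + fst q\<bar>" using xp xq by linarith
  have "2 * \<bar>snd q - snd p\<bar> / \<bar>fst p + fst q\<bar> \<le> 2 * h\<^sup>2 / (2 * h)"
    by (rule frac_le) (use dy sum h in auto)
  also have "\<dots> = h" using h by (simp add: power2_eq_square)
  finally show ?thesis using dcc_le_sum_abs[of p q] sum h dx by linarith
qed

lemma dist_cc_axis_lower:
  assumes "S \<noteq> {}" and "\<And>p. p \<in> S \<Longrightarrow> a \<le> \<bar>fst p\<bar>" and "\<And>p. p \<in> S \<Longrightarrow> fst p \<noteq> 0"
  shows "a \<le> dist_cc S axisA"
  unfolding dist_cc_def
proof (rule cInf_greatest)
  show "{dcc p q |p q. p \<in> S \<and> q \<in> axisA} \<noteq> {}"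
    using assms(1) by (auto simp: axisA_def)
next
  fix d assume "d \<in> {dcc p q |p q. p \<in> S \<and> q \<in> axisA}"
  then obtain p q where pq: "d = dcc p q" "p \<in> S" "fst q = 0" by (auto simp: axisA_def)
  then have "\<bar>fst q - fst p\<bar> \<le> dcc p q" using assms(3) by (intro dcc_ge_fst_dist) simp
  then show "a \<le> d" using assms(2)[OF pq(2)] pq by simp
qed

lemma diam_cc_upper:
  assumes "S \<noteq> {}" and "\<And>p q. p \<in> S \<Longrightarrow> q \<in> S \<Longrightarrow> dcc p q \<le> D"
  shows "diam_cc S \<le> D"
  unfolding diam_cc_def using assms by (intro cSup_least) blast+

lemma whitney_family_memberD:
  assumes W: "whitney_family W" and QW: "Q \<in> W"
  shows "\<exists>j m n. Q = dyadic_rect j m n" and "Q \<subseteq> Omega" and "dist_cc Q axisA \<le> diam_cc Q"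
proof -
  have rects: "\<forall>Q\<in>W. \<exists>j m n. Q = dyadic_rect j m n"
    using W unfolding whitney_family_def by (elim conjE) assumption
  have cover: "\<Union>W = Omega"
    using W unfolding whitney_family_def by (elim conjE) assumption
  have whitney: "\<forall>Q\<in>W. dist_cc Q axisA \<le> diam_cc Q \<and> diam_cc Q \<le> 8 * dist_cc Q axisA"
    using W unfolding whitney_family_def by (elim conjE) assumption
  show "\<exists>j m n. Q = dyadic_rect j m n" using rects QW by blast
  show "Q \<subseteq> Omega" using QW cover by (metis Union_upper)
  show "dist_cc Q axisA \<le> diam_cc Q" using whitney QW by blast
qed

lemma dyadic_rect_off_axis:
  assumes off: "dyadic_rect j m n \<subseteq> Omega" and h_def: "h = 2 powr (- real_of_int j)"
  obtains k where "k \<ge> 1" and "dyadic_rect j m n \<noteq> {}"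
    and "\<And>p. p \<in> dyadic_rect j m n \<Longrightarrow> h * k \<le> \<bar>fst p\<bar> \<and> \<bar>fst p\<bar> \<le> h * k + h"
    and "\<And>p q. p \<in> dyadic_rect j m n \<Longrightarrow> q \<in> dyadic_rect j m n \<Longrightarrow>
           0 < fst p * fst q \<and> \<bar>fst p - fst q\<bar> \<le> h \<and> \<bar>snd p - snd q\<bar> \<le> h\<^sup>2"
proof -
  define I where "I = {h * m .. h * (m + 1)}"
  have h: "h > 0" by (simp add: h_def)
  have mem: "p \<in> dyadic_rect j m n \<longleftrightarrow> fst p \<in> I \<and> h\<^sup>2 * n \<le> snd p \<and> snd p \<le> h\<^sup>2 * (n + 1)" for p
    unfolding dyadic_rect_scaled[OF h_def] I_def by (simp add: mem_Times_iff)
  have "0 \<notin> I" using off mem[of "(0, h\<^sup>2 * n)"] h by (auto simp: Omega_def)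
  then obtain k where k: "k \<ge> 1" and x_I: "\<forall>x\<in>I. h * k \<le> \<bar>x\<bar> \<and> \<bar>x\<bar> \<le> h * k + h"
    and sg_I: "\<forall>x\<in>I. \<forall>y\<in>I. 0 < x * y"
    using dyadic_interval_off_origin[OF h] unfolding I_def by blast
  show ?thesis
  proof (rule that[OF k])
    show "dyadic_rect j m n \<noteq> {}" using mem[of "(h * m, h\<^sup>2 * n)"] h by (auto simp: I_def)
    show "h * k \<le> \<bar>fst p\<bar> \<and> \<bar>fst p\<bar> \<le> h * k + h" if "p \<in> dyadic_rect j m n" for p
      using x_I that mem by blast
    show "0 < fst p * fst q \<and> \<bar>fst p - fst q\<bar> \<le> h \<and> \<bar>snd p - snd q\<bar> \<le> h\<^sup>2"
      if "p \<in> dyadic_rect j m n" "q \<in> dyadic_rect j m n" for p q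
      using sg_I that mem[of p] mem[of q] by (auto simp: I_def abs_le_iff algebra_simps)
  qed
qed

definition whitney_scale :: "real \<Rightarrow> (real \<times> real) set \<Rightarrow> bool" where
  "whitney_scale h Q \<longleftrightarrow> h > 0 \<and> Q \<noteq> {} \<and>
     (\<forall>p\<in>Q. h \<le> \<bar>fst p\<bar> \<and> \<bar>fst p\<bar> \<le> 3 * h) \<and>
     (\<forall>p\<in>Q. \<forall>q\<in>Q. 0 < fst p * fst q \<and> \<bar>snd p - snd q\<bar> \<le> h\<^sup>2)"

(* Every rectangle of a Whitney family has a width in this sense: the Whitney condition
   k h \<le> dist \<le> diam \<le> 2h forces it to lie at most two widths from the axis. *)
lemma whitney_rectangle_scale:
  assumes W: "whitney_family W" and QW: "Q \<in> W"
  shows "\<exists>h. whitney_scale h Q"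
proof -
  obtain j m n where Q: "Q = dyadic_rect j m n" using whitney_family_memberD(1)[OF W QW] by blast
  define h where "h = 2 powr (- real_of_int j)"
  have h: "h > 0" by (simp add: h_def)
  obtain k where k: "k \<ge> 1" and Q_ne: "Q \<noteq> {}"
    and x: "\<And>p. p \<in> Q \<Longrightarrow> h * k \<le> \<bar>fst p\<bar> \<and> \<bar>fst p\<bar> \<le> h * k + h"
    and pairs: "\<And>p q. p \<in> Q \<Longrightarrow> q \<in> Q \<Longrightarrow>
                  0 < fst p * fst q \<and> \<bar>fst p - fst q\<bar> \<le> h \<and> \<bar>snd p - snd q\<bar> \<le> h\<^sup>2"
    using dyadic_rect_off_axis[OF _ h_def] whitney_family_memberD(2)[OF W QW] unfolding Q by metis
  have hk: "h \<le> h * k" using k h by simp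
  have x_ne: "fst p \<noteq> 0" if "p \<in> Q" for p using x[OF that] hk h by linarith
  have "h * k \<le> dist_cc Q axisA"
    using Q_ne x x_ne by (intro dist_cc_axis_lower) auto
  also have "\<dots> \<le> diam_cc Q" using whitney_family_memberD(3)[OF W QW] .
  also have "\<dots> \<le> 2 * h"
  proof (rule diam_cc_upper[OF Q_ne])
    fix p q assume p: "p \<in> Q" and q: "q \<in> Q"
    have "h \<le> \<bar>fst p\<bar>" "h \<le> \<bar>fst q\<bar>" using x[OF p] x[OF q] hk by linarith+
    then show "dcc p q \<le> 2 * h" using pairs[OF p q] pairs[OF q p] by (intro dcc_le_box[OF h]) auto
  qed
  finally have "h \<le> \<bar>fst p\<bar> \<and> \<bar>fst p\<bar> \<le> 3 * h" if "p \<in> Q" for p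
    using x[OF that] hk by linarith
  then have "whitney_scale h Q"
    using h Q_ne pairs unfolding whitney_scale_def by blast
  then show ?thesis ..
qed

lemma whitney_scale_cluster:
  assumes "whitney_scale h Q" "p0 \<in> Q"
  shows "scale_cluster 3 h p0 Q"
  unfolding scale_cluster_def
proof
  fix z assume z: "z \<in> Q"
  have "h > 0" "h \<le> \<bar>fst z\<bar>" "\<bar>fst z\<bar> \<le> 3 * h" "0 < fst z * fst p0" "\<bar>snd z - snd p0\<bar> \<le> h\<^sup>2"
    using assms z unfolding whitney_scale_def by auto
  then show "h \<le> 3 * \<bar>fst z\<bar> \<and> \<bar>fst z\<bar> \<le> 3 * h \<and> 0 < fst z * fst p0 \<and> \<bar>snd z - snd p0\<bar> \<le> 3 * h\<^sup>2"
    by auto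
qed

(* A rectangle touching a K-cluster at scale h has width between h/(3K) and K h, so
   the union of all rectangles touching the cluster is a (K^2+K)-cluster. *)
lemma scale_cluster_touching_union:
  assumes W: "\<forall>Q\<in>W. \<exists>h'. whitney_scale h' Q"
    and h: "h > 0" and K: "K \<ge> 2" and S: "scale_cluster K h p0 S"
  shows "scale_cluster (K * K + K) h p0 (touching_union W S)"
  unfolding scale_cluster_def
proof
  fix z assume "z \<in> touching_union W S"
  then obtain Q c where Q: "Q \<in> W" "z \<in> Q" and c: "c \<in> Q" "c \<in> S"
    unfolding touching_union_def by blast
  obtain h' where h': "whitney_scale h' Q" using W Q(1) by blast
  have h'0: "h' > 0" using h' by (simp add: whitney_scale_def)
  have c_Q: "h' \<le> \<bar>fst c\<bar>" "\<bar>fst c\<bar> \<le> 3 * h'" and z_Q: "h' \<le> \<bar>fst z\<bar>" "\<bar>fst z\<bar> \<le> 3 * h'"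
    and zc: "0 < fst z * fst c" "\<bar>snd z - snd c\<bar> \<le> h'\<^sup>2"
    using h' Q(2) c(1) unfolding whitney_scale_def by auto
  have c_S: "h \<le> K * \<bar>fst c\<bar>" "\<bar>fst c\<bar> \<le> K * h" "0 < fst c * fst p0" "\<bar>snd c - snd p0\<bar> \<le> K * h\<^sup>2"
    using S c(2) unfolding scale_cluster_def by auto
  have "K * \<bar>fst c\<bar> \<le> K * (3 * h')" using c_Q(2) K by (intro mult_left_mono) auto
  then have scales: "h' \<le> K * h" "h \<le> 3 * K * h'" using c_Q(1) c_S(1,2) by auto
  have KK: "3 * K \<le> K * K + K" using mult_right_mono[OF K, of K] K by simp
  have "3 * K * h' \<le> 3 * K * \<bar>fst z\<bar>" using z_Q(1) K by (intro mult_left_mono) auto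
  then have "h \<le> 3 * K * \<bar>fst z\<bar>" using scales(2) by linarith
  also have "\<dots> \<le> (K * K + K) * \<bar>fst z\<bar>" using KK by (rule mult_right_mono) simp
  finally have x_lower: "h \<le> (K * K + K) * \<bar>fst z\<bar>" .
  have "\<bar>fst z\<bar> \<le> 3 * K * h" using z_Q(2) scales(1) by linarith
  also have "\<dots> \<le> (K * K + K) * h" using KK h by (intro mult_right_mono) auto
  finally have x_upper: "\<bar>fst z\<bar> \<le> (K * K + K) * h" .
  have "h'\<^sup>2 \<le> (K * h)\<^sup>2" using scales(1) h'0 by (intro power_mono) auto
  moreover have "(K * K + K) * h\<^sup>2 = (K * h)\<^sup>2 + K * h\<^sup>2" by (simp add: algebra_simps power2_eq_square)
  ultimately have y: "\<bar>snd z - snd p0\<bar> \<le> (K * K + K) * h\<^sup>2" using zc(2) c_S(4) by linarith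
  have "0 < fst z * fst p0" using zc(1) c_S(3) by (metis same_sign_trans mult.commute)
  then show "h \<le> (K * K + K) * \<bar>fst z\<bar> \<and> \<bar>fst z\<bar> \<le> (K * K + K) * h \<and>
      0 < fst z * fst p0 \<and> \<bar>snd z - snd p0\<bar> \<le> (K * K + K) * h\<^sup>2"
    using x_lower x_upper y by blast
qed

theorem lemma4p8:
  fixes W :: "(real \<times> real) set set"
  assumes "whitney_family W"
  shows "\<exists>L::real. L \<ge> 1 \<and> (\<exists>N::nat. \<forall>Q\<in>W. \<exists>f.
           bilip_embedding L N (touching_union W (touching_union W Q)) f)"
proof -
  have scales: "\<forall>Q\<in>W. \<exists>h. whitney_scale h Q"
    using whitney_rectangle_scale[OF assms] by blast
  have "\<exists>f. bilip_embedding 313 2 (touching_union W (touching_union W Q)) f" if QW: "Q \<in> W" for Q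
  proof -
    obtain h where hQ: "whitney_scale h Q" using scales QW by blast
    then have h: "h > 0" and "Q \<noteq> {}" by (simp_all add: whitney_scale_def)
    then obtain p0 where p0: "p0 \<in> Q" by blast
    have "scale_cluster 3 h p0 Q" using hQ p0 by (rule whitney_scale_cluster)
    then have "scale_cluster (3 * 3 + 3) h p0 (touching_union W Q)"
      by (rule scale_cluster_touching_union[OF scales h, rotated]) simp
    then have "scale_cluster (12 * 12 + 12) h p0 (touching_union W (touching_union W Q))"
      by (intro scale_cluster_touching_union[OF scales h]) simp_all
    from scale_cluster_bilip_embedding[OF h _ this] show ?thesis by auto
  qed
  then show ?thesis by (intro exI[of _ 313] conjI exI[of _ 2]) auto
qed

end
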